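(* For every $n\equiv 15 \pmod{16}$ (with $n\geq 15$), there exists an almost 2-perfect maximum 8-cycle packing of $K_n$.
   Context: An 8-cycle packing of $K_n$ on vertex set $\mathcal{X}$ is a triple $(\mathcal{X},\mathcal{C},\mathcal{L})$ with $\mathcal{C}$ a collection of pairwise edge-disjoint 8-cycles of $K_n$ and leave $\mathcal{L}$ the set of edges in no cycle of $\mathcal{C}$; it is maximum if $|\mathcal{L}|$ is minimum among all 8-cycle packings of $K_n$. For an 8-cycle $C$, an inside 8-cycle of $C$ is an 8-cycle on the same vertex set sharing no edge with $C$. The packing is almost 2-perfect if one can choose for each $C\in\mathcal{C}$ an inside 8-cycle $C'$ such that $(\mathcal{X},\{C'\},\mathcal{L})$ is again an 8-cycle packing with the same leave. *)

theory Defs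
  imports Main
begin

definition kedges :: "'a set \<Rightarrow> 'a set set" where
  "kedges X = {e. e \<subseteq> X \<and> card e = 2}"

definition cycle8 :: "'a set \<Rightarrow> 'a set set \<Rightarrow> bool" where
  "cycle8 X c \<longleftrightarrow> (\<exists>v :: nat \<Rightarrow> 'a. inj_on v {..<8} \<and> v ` {..<8} \<subseteq> X \<and>
      c = {{v i, v ((i + 1) mod 8)} | i. i < 8})"

definition packing8 :: "'a set \<Rightarrow> 'a set set set \<Rightarrow> 'a set set \<Rightarrow> bool" where
  "packing8 X C L \<longleftrightarrow> (\<forall>c\<in>C. cycle8 X c) \<and> pairwise (\<lambda>a b. a \<inter> b = {}) C
      \<and> L = kedges X - \<Union>C"

definition max_packing8 :: "'a set \<Rightarrow> 'a set set set \<Rightarrow> 'a set set \<Rightarrow> bool" where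
  "max_packing8 X C L \<longleftrightarrow> packing8 X C L \<and>
      (\<forall>C' L'. packing8 X C' L' \<longrightarrow> card L \<le> card L')"

definition inside8 :: "'a set set \<Rightarrow> 'a set set \<Rightarrow> bool" where
  "inside8 c c' \<longleftrightarrow> cycle8 (\<Union>c) c' \<and> \<Union>c' = \<Union>c \<and> c \<inter> c' = {}"

definition almost_2perfect8 :: "'a set \<Rightarrow> 'a set set set \<Rightarrow> 'a set set \<Rightarrow> bool" where
  "almost_2perfect8 X C L \<longleftrightarrow>
     (\<exists>f. (\<forall>c\<in>C. inside8 c (f c)) \<and> packing8 X (f ` C) L)"

end

theory Submission
  imports Defs "HOL-Library.Disjoint_Sets"
begin

text \<open>An 8-cycle packing of \<open>K\<^sub>n\<close>, \<open>n \<equiv> 15 (mod 16)\<close>, leaves at least 9 edges: the leave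
  has \<open>n choose 2 \<equiv> 1 (mod 8)\<close> edges, and since \<open>n\<close> is odd every vertex has even degree in the
  leave, so it is not a single edge. Nine edges, three disjoint triangles, are attained recursively.
  \<open>K\<^sub>1\<^sub>5\<close> minus the triangles, \<open>K\<^sub>2\<^sub>3 - K\<^sub>7\<close> and \<open>K\<^sub>4\<^sub>,\<^sub>4\<close> each decompose into
  8-cycles paired with inside 8-cycles that again decompose the graph; these base decompositions are
  checked from explicit certificates. Passing from \<open>n\<close> to \<open>n + 16\<close>, the new edges form a
  \<open>K\<^sub>2\<^sub>3 - K\<^sub>7\<close> on the last 7 old and the 16 new vertices, together with the complete
  bipartite graph between the remaining \<open>n - 7\<close> old vertices and the new ones, which splits into
  copies of \<open>K\<^sub>4\<^sub>,\<^sub>4\<close>. The outer cycles form a maximum packing, and the inside cycles witness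
  that it is almost 2-perfect.\<close>

lemma cycle8_edges:
  assumes "cycle8 X c"
  obtains v :: "nat \<Rightarrow> 'a" where "inj_on v {..<8}" "v ` {..<8} \<subseteq> X"
    "c = (\<lambda>i. {v i, v (Suc i mod 8)}) ` {..<8}"
proof -
  from assms obtain v :: "nat \<Rightarrow> 'a" where "inj_on v {..<8}" "v ` {..<8} \<subseteq> X"
      "c = {{v i, v ((i + 1) mod 8)} | i. i < 8}"
    unfolding cycle8_def by blast
  moreover have "{{v i, v ((i + 1) mod 8)} | i. i < 8} = (\<lambda>i. {v i, v (Suc i mod 8)}) ` {..<8}"
    by auto
  ultimately show ?thesis using that by blast
qed

lemma cycle8I:
  assumes "inj_on v {..<8}" "v ` {..<8} \<subseteq> X" "c = (\<lambda>i. {v i, v (Suc i mod 8)}) ` {..<8}"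
  shows "cycle8 X c"
proof -
  have "c = {{v i, v ((i + 1) mod 8)} | i. i < 8}" using assms(3) by auto
  with assms(1,2) show ?thesis unfolding cycle8_def by blast
qed

lemma inj_on_cycle8_edge:
  assumes "inj_on v {..<8}"
  shows "inj_on (\<lambda>i. {v i, v (Suc i mod 8)}) {..<8}"
proof (rule inj_onI)
  fix i j :: nat
  assume i: "i \<in> {..<8}" and j: "j \<in> {..<8}"
    and eq: "{v i, v (Suc i mod 8)} = {v j, v (Suc j mod 8)}"
  have "Suc i mod 8 \<in> {..<8}" "Suc j mod 8 \<in> {..<8}" by auto
  with eq i j have "i = j \<or> (i = Suc j mod 8 \<and> Suc i mod 8 = j)"
    using inj_on_eq_iff[OF assms] by (auto simp: doubleton_eq_iff)
  then show "i = j" using i j by (auto simp: mod_Suc split: if_splits)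
qed

lemma card_cycle8:
  assumes "cycle8 X c"
  shows "card c = 8"
proof -
  obtain v where v: "inj_on v {..<8}" "v ` {..<8} \<subseteq> X"
    "c = (\<lambda>i. {v i, v (Suc i mod 8)}) ` {..<8}"
    by (rule cycle8_edges[OF assms])
  have "card c = card {..<8::nat}"
    unfolding v(3) by (rule card_image[OF inj_on_cycle8_edge[OF v(1)]])
  then show ?thesis by simp
qed

lemma cycle8_subset_kedges:
  assumes "cycle8 X c"
  shows "c \<subseteq> kedges X"
proof -
  obtain v where v: "inj_on v {..<8}" "v ` {..<8} \<subseteq> X"
    "c = (\<lambda>i. {v i, v (Suc i mod 8)}) ` {..<8}"
    by (rule cycle8_edges[OF assms])
  have "{v i, v (Suc i mod 8)} \<in> kedges X" if "i < 8" for i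
  proof -
    have "i \<noteq> Suc i mod 8" using that by (auto simp: mod_Suc)
    then have "v i \<noteq> v (Suc i mod 8)" using inj_on_eq_iff[OF v(1)] that by simp
    then show ?thesis using v(2) that by (auto simp: kedges_def)
  qed
  then show ?thesis using v(3) by auto
qed

lemma cycle8_restrict:
  assumes "cycle8 Y c" "\<Union>c \<subseteq> X"
  shows "cycle8 X c"
proof -
  obtain v :: "nat \<Rightarrow> 'a" where v: "inj_on v {..<8}" "c = {{v i, v ((i + 1) mod 8)} | i. i < 8}"
    using assms(1) unfolding cycle8_def by blast
  have "v ` {..<8} \<subseteq> \<Union>c" using v(2) by auto
  with v assms(2) show ?thesis unfolding cycle8_def by blast
qed

lemma even_card_cycle8_star:
  assumes "cycle8 X c"
  shows "even (card {e \<in> c. a \<in> e})"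
proof -
  obtain v where v: "inj_on v {..<8}" "v ` {..<8} \<subseteq> X"
    "c = (\<lambda>i. {v i, v (Suc i mod 8)}) ` {..<8}"
    by (rule cycle8_edges[OF assms])
  show ?thesis
  proof (cases "a \<in> v ` {..<8}")
    case False
    then have "{e \<in> c. a \<in> e} = {}" using v(3) by auto
    then show ?thesis by (metis card.empty even_zero)
  next
    case True
    then obtain j where j: "j < 8" "a = v j" by auto
    define pred where "pred = (if j = 0 then 7 else j - 1)"
    have at_a: "a \<in> {v i, v (Suc i mod 8)} \<longleftrightarrow> i \<in> {j, pred}" if i: "i < 8" for i
    proof -
      have "Suc i mod 8 < 8" by simp
      then have "a \<in> {v i, v (Suc i mod 8)} \<longleftrightarrow> j = i \<or> j = Suc i mod 8"
        using inj_on_eq_iff[OF v(1), of j] j i by auto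
      also have "\<dots> \<longleftrightarrow> i \<in> {j, pred}"
        using i j unfolding pred_def by (auto simp: mod_Suc split: if_splits)
      finally show ?thesis .
    qed
    have sub: "{j, pred} \<subseteq> {..<8}" and ne: "j \<noteq> pred" using j unfolding pred_def by auto
    have "{i \<in> {..<8}. a \<in> {v i, v (Suc i mod 8)}} = {j, pred}" using at_a sub by auto
    then have "{e \<in> c. a \<in> e} = (\<lambda>i. {v i, v (Suc i mod 8)}) ` {j, pred}"
      unfolding v(3) by blast
    also have "card \<dots> = card {j, pred}"
      by (rule card_image[OF inj_on_subset[OF inj_on_cycle8_edge[OF v(1)] sub]])
    finally have "card {e \<in> c. a \<in> e} = 2" using ne by simp
    then show ?thesis by simp
  qed
qed

lemma finite_kedges: "finite X \<Longrightarrow> finite (kedges X)"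
  unfolding kedges_def by (rule finite_subset[of _ "Pow X"]) auto

lemma card_kedges: "finite X \<Longrightarrow> card (kedges X) = card X choose 2"
  unfolding kedges_def by (rule n_subsets)

lemma kedges_iff: "e \<in> kedges X \<longleftrightarrow> (\<exists>x y. x \<in> X \<and> y \<in> X \<and> x \<noteq> y \<and> e = {x, y})"
  unfolding kedges_def by (auto simp: card_2_iff)

lemma kedges_mono: "X \<subseteq> Y \<Longrightarrow> kedges X \<subseteq> kedges Y"
  unfolding kedges_def by blast

lemma kedges_mono_iff: "e \<in> kedges X \<Longrightarrow> e \<in> kedges Y \<longleftrightarrow> e \<subseteq> Y"
  unfolding kedges_def by blast

lemma Union_kedges_subset: "\<Union>(kedges X) \<subseteq> X"
  unfolding kedges_def by blast

lemma card_kedges_star: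
  assumes "finite X" "a \<in> X"
  shows "card {e \<in> kedges X. a \<in> e} = card X - 1"
proof -
  have "{e \<in> kedges X. a \<in> e} = (\<lambda>y. {a, y}) ` (X - {a})"
    using assms(2) by (auto simp: kedges_def card_2_iff)
  moreover have "inj_on (\<lambda>y. {a, y}) (X - {a})"
    by (rule inj_onI) (auto simp: doubleton_eq_iff)
  ultimately show ?thesis using assms by (simp add: card_image)
qed

lemma kedges_lessThan: "kedges {..<b} = {{x, y} | x y. x < y \<and> y < (b::nat)}"
proof (intro set_eqI iffI)
  fix e assume "e \<in> kedges {..<b}"
  then obtain x y where xy: "x < b" "y < b" "x \<noteq> y" "e = {x, y}" by (auto simp: kedges_iff)
  have "e = {min x y, max x y}" using xy(4) by (auto simp: min_def max_def)
  moreover have "min x y < max x y" "max x y < b" using xy(1-3) by auto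
  ultimately show "e \<in> {{x, y} | x y. x < y \<and> y < b}" by blast
next
  fix e assume "e \<in> {{x, y} | x y. x < y \<and> y < b}"
  then obtain x y where "x < y" "y < b" "e = {x, y}" by blast
  then show "e \<in> kedges {..<b}" unfolding kedges_iff by (intro exI[of _ x] exI[of _ y]) auto
qed

lemma ordered_edges_Diff:
  "{{x, y} | x y. (x::nat) < y \<and> P x y} - {{x, y} | x y. x < y \<and> Q x y} =
    {{x, y} | x y. x < y \<and> P x y \<and> \<not> Q x y}"
proof (intro set_eqI iffI)
  fix e assume "e \<in> {{x, y} | x y. x < y \<and> P x y} - {{x, y} | x y. x < y \<and> Q x y}"
  then show "e \<in> {{x, y} | x y. x < y \<and> P x y \<and> \<not> Q x y}" by blast
next
  fix e assume "e \<in> {{x, y} | x y. x < y \<and> P x y \<and> \<not> Q x y}"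
  then obtain x y where xy: "x < y" "P x y" "\<not> Q x y" "e = {x, y}" by blast
  have "\<not> Q x' y'" if "x' < y'" "e = {x', y'}" for x' y'
    using xy that by (auto simp: doubleton_eq_iff)
  then show "e \<in> {{x, y} | x y. x < y \<and> P x y} - {{x, y} | x y. x < y \<and> Q x y}"
    using xy by blast
qed

definition biclique :: "'a set \<Rightarrow> 'a set \<Rightarrow> 'a set set" where
  "biclique A B = {{a, b} | a b. a \<in> A \<and> b \<in> B}"

lemma
  assumes "A \<inter> B = {}" "A \<inter> C = {}" "B \<inter> C = {}"
  shows kedges_Un_three:
      "kedges (A \<union> B \<union> C) = kedges (A \<union> B) \<union> (kedges (B \<union> C) - kedges B) \<union> biclique A C"
    and kedges_Un_three_disjoint:
      "kedges (A \<union> B) \<inter> (kedges (B \<union> C) - kedges B) = {}"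
      "(kedges (A \<union> B) \<union> (kedges (B \<union> C) - kedges B)) \<inter> biclique A C = {}"
proof -
  have bi: "biclique A C \<subseteq> kedges (A \<union> B \<union> C)"
  proof
    fix e assume "e \<in> biclique A C"
    then obtain a c where "a \<in> A" "c \<in> C" "e = {a, c}" unfolding biclique_def by blast
    moreover have "a \<noteq> c" using assms(2) calculation by blast
    ultimately show "e \<in> kedges (A \<union> B \<union> C)" unfolding kedges_iff by blast
  qed
  have bi_disj: "biclique A C \<inter> kedges (A \<union> B) = {}" "biclique A C \<inter> kedges (B \<union> C) = {}"
    using assms unfolding biclique_def kedges_def by blast+
  have "kedges (A \<union> B \<union> C) \<subseteq> kedges (A \<union> B) \<union> (kedges (B \<union> C) - kedges B) \<union> biclique A C"
  proof
    fix e assume e: "e \<in> kedges (A \<union> B \<union> C)"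
    show "e \<in> kedges (A \<union> B) \<union> (kedges (B \<union> C) - kedges B) \<union> biclique A C"
    proof (cases "e \<subseteq> A \<union> B \<or> e \<subseteq> B \<union> C")
      case True
      then show ?thesis using e kedges_mono_iff[OF e] by blast
    next
      case False
      then obtain a c where "a \<in> e" "a \<in> A" "c \<in> e" "c \<in> C" using e unfolding kedges_def by blast
      moreover obtain x y where "e = {x, y}" using e by (auto simp: kedges_iff)
      moreover have "a \<noteq> c" using assms(2) \<open>a \<in> A\<close> \<open>c \<in> C\<close> by blast
      ultimately have "e = {a, c}" by auto
      then show ?thesis using \<open>a \<in> A\<close> \<open>c \<in> C\<close> unfolding biclique_def by blast
    qed
  qed
  moreover have "kedges (A \<union> B) \<subseteq> kedges (A \<union> B \<union> C)" "kedges (B \<union> C) \<subseteq> kedges (A \<union> B \<union> C)"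
    unfolding kedges_def by blast+
  ultimately show "kedges (A \<union> B \<union> C) = kedges (A \<union> B) \<union> (kedges (B \<union> C) - kedges B) \<union> biclique A C"
    using bi by blast
  have "e \<in> kedges B" if "e \<in> kedges (A \<union> B)" "e \<in> kedges (B \<union> C)" for e
    using that assms(2) kedges_mono_iff[OF that(1)] unfolding kedges_def by blast
  then show "kedges (A \<union> B) \<inter> (kedges (B \<union> C) - kedges B) = {}" by blast
  show "(kedges (A \<union> B) \<union> (kedges (B \<union> C) - kedges B)) \<inter> biclique A C = {}"
    using bi_disj by blast
qed

lemma biclique_UN: "biclique (\<Union>i\<in>I. A i) (\<Union>j\<in>J. B j) = (\<Union>(i, j)\<in>I \<times> J. biclique (A i) (B j))"
  unfolding biclique_def by blast

lemma disjoint_family_on_biclique: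
  assumes "disjoint_family_on A I" "disjoint_family_on B J" "(\<Union>i\<in>I. A i) \<inter> (\<Union>j\<in>J. B j) = {}"
  shows "disjoint_family_on (\<lambda>(i, j). biclique (A i) (B j)) (I \<times> J)"
  unfolding disjoint_family_on_def
proof (intro ballI impI)
  fix x y assume x: "x \<in> I \<times> J" and y: "y \<in> I \<times> J" and "x \<noteq> y"
  obtain i j i' j' where ij: "x = (i, j)" "y = (i', j')" by (cases x, cases y) blast
  show "(case x of (i, j) \<Rightarrow> biclique (A i) (B j)) \<inter> (case y of (i, j) \<Rightarrow> biclique (A i) (B j)) = {}"
  proof (rule equals0I)
    fix e assume "e \<in> (case x of (i, j) \<Rightarrow> biclique (A i) (B j)) \<inter> (case y of (i, j) \<Rightarrow> biclique (A i) (B j))"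
    then obtain a b a' b' where ab: "a \<in> A i" "b \<in> B j" "a' \<in> A i'" "b' \<in> B j'" "e = {a, b}" "e = {a', b'}"
      unfolding ij biclique_def by blast
    have "a \<noteq> b'" "b \<noteq> a'" using ab x y ij assms(3) by blast+
    then have "a = a'" "b = b'" using ab(5,6) by (auto simp: doubleton_eq_iff)
    then have "i = i'" "j = j'" using ab x y ij assms(1,2) unfolding disjoint_family_on_def by blast+
    then show False using \<open>x \<noteq> y\<close> ij by simp
  qed
qed

lemma atLeastLessThan_eq_UN_blocks:
  fixes m k p :: nat
  shows "{m..<m + k * p} = (\<Union>a<p. {m + k * a..<m + k * a + k})" (is "?L = ?R")
proof
  show "?R \<subseteq> ?L"
  proof
    fix x assume "x \<in> ?R"
    then obtain a where "a < p" "m + k * a \<le> x" "x < m + k * a + k" by auto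
    moreover have "k * a + k \<le> k * p" using \<open>a < p\<close> mult_le_mono2[of "Suc a" p k] by simp
    ultimately show "x \<in> ?L" by simp
  qed
  show "?L \<subseteq> ?R"
  proof
    fix x assume x: "x \<in> ?L"
    then have k: "0 < k" by (cases k) auto
    define a where "a = (x - m) div k"
    have "a < p" unfolding a_def using x by (auto intro: less_mult_imp_div_less simp: mult.commute)
    moreover have "x - m = k * a + (x - m) mod k" unfolding a_def by (simp add: mult.commute)
    then have "k * a \<le> x - m" "x - m < k * a + k" using mod_less_divisor[OF k, of "x - m"] by linarith+
    ultimately show "x \<in> ?R" using x by (intro UN_I[of a]) auto
  qed
qed

lemma disjoint_family_on_blocks:
  fixes m k :: nat
  shows "disjoint_family_on (\<lambda>a. {m + k * a..<m + k * a + k}) I"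
  unfolding disjoint_family_on_def
proof (intro ballI impI)
  fix a b :: nat assume "a \<noteq> b"
  then have "k * a + k \<le> k * b \<or> k * b + k \<le> k * a"
    using mult_le_mono2[of "Suc a" b k] mult_le_mono2[of "Suc b" a k] by (cases "a < b") auto
  then show "{m + k * a..<m + k * a + k} \<inter> {m + k * b..<m + k * b + k} = {}" by auto
qed

section \<open>The leave of a packing\<close>

lemma card_filter_Union_packing8:
  assumes "packing8 X C L" "finite X"
  shows "card {e \<in> \<Union>C. Q e} = (\<Sum>c\<in>C. card {e \<in> c. Q e})"
proof -
  have "\<forall>c\<in>C. c \<subseteq> kedges X" and disj: "pairwise (\<lambda>a b. a \<inter> b = {}) C"
    using assms(1) cycle8_subset_kedges unfolding packing8_def by blast+
  then have fin: "finite C" "\<forall>c\<in>C. finite c"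
    using finite_kedges[OF assms(2)] by (auto intro: finite_subset[of C "Pow (kedges X)"] finite_subset)
  have "card (\<Union>c\<in>C. {e \<in> c. Q e}) = (\<Sum>c\<in>C. card {e \<in> c. Q e})"
    by (rule card_UN_disjoint) (use fin disj in \<open>auto simp: pairwise_def\<close>)
  moreover have "{e \<in> \<Union>C. Q e} = (\<Union>c\<in>C. {e \<in> c. Q e})" by auto
  ultimately show ?thesis by simp
qed

lemma card_leave_packing8:
  assumes "packing8 X C L" "finite X"
  shows "card L + 8 * card C = card X choose 2"
proof -
  have L: "L = kedges X - \<Union>C" and sub: "\<Union>C \<subseteq> kedges X"
    using assms(1) cycle8_subset_kedges unfolding packing8_def by blast+
  have "card (\<Union>C) = (\<Sum>c\<in>C. card c)"
    using card_filter_Union_packing8[OF assms, of "\<lambda>_. True"]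
    by (simp only: simp_thms Collect_mem_eq)
  also have "\<dots> = (\<Sum>c\<in>C. 8)"
    using assms(1) card_cycle8 unfolding packing8_def by (intro sum.cong) auto
  finally show ?thesis
    using card_Diff_subset[OF finite_subset[OF sub finite_kedges[OF assms(2)]] sub]
      card_mono[OF finite_kedges[OF assms(2)] sub] card_kedges[OF assms(2)] L by simp
qed

lemma even_card_leave_star:
  assumes "packing8 X C L" "finite X" "odd (card X)" "a \<in> X"
  shows "even (card {e \<in> L. a \<in> e})"
proof -
  have L: "L = kedges X - \<Union>C" and sub: "\<Union>C \<subseteq> kedges X"
    using assms(1) cycle8_subset_kedges unfolding packing8_def by blast+
  have "finite {e \<in> \<Union>C. a \<in> e}" "finite {e \<in> L. a \<in> e}"
    using L sub finite_kedges[OF assms(2)] by (auto intro: finite_subset)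
  moreover have "{e \<in> \<Union>C. a \<in> e} \<inter> {e \<in> L. a \<in> e} = {}" using L by blast
  moreover have "{e \<in> kedges X. a \<in> e} = {e \<in> \<Union>C. a \<in> e} \<union> {e \<in> L. a \<in> e}"
    using L sub by blast
  ultimately have "card {e \<in> kedges X. a \<in> e} = card {e \<in> \<Union>C. a \<in> e} + card {e \<in> L. a \<in> e}"
    by (simp add: card_Un_disjoint)
  moreover have "even (card {e \<in> kedges X. a \<in> e})"
    using card_kedges_star[OF assms(2,4)] assms(3) by simp
  moreover have "even (card {e \<in> \<Union>C. a \<in> e})"
    unfolding card_filter_Union_packing8[OF assms(1,2)]
  proof (rule dvd_sum)
    fix c assume "c \<in> C"
    then have "cycle8 X c" using assms(1) unfolding packing8_def by blast
    then show "even (card {e \<in> c. a \<in> e})" by (rule even_card_cycle8_star)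
  qed
  ultimately show ?thesis by simp
qed

lemma card_leave_ne_1:
  assumes "packing8 X C L" "finite X" "odd (card X)"
  shows "card L \<noteq> 1"
proof
  assume "card L = 1"
  then obtain e where e: "L = {e}" by (rule card_1_singletonE)
  then have "e \<in> kedges X" using assms(1) unfolding packing8_def by blast
  then obtain a b where "a \<in> X" "e = {a, b}" by (auto simp: kedges_def card_2_iff)
  then have "{e' \<in> L. a \<in> e'} = {e}" using e by auto
  then show False using even_card_leave_star[OF assms \<open>a \<in> X\<close>] by simp
qed

lemma choose_two_mod_8:
  assumes "n mod 16 = (15::nat)"
  shows "(n choose 2) mod 8 = 1"
proof -
  obtain q where n: "n = 16 * q + 15" using assms by (metis mult.commute div_mult_mod_eq)
  define K where "K = 16 * q * q + 29 * q + 13"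
  have "n * (n - 1) = 2 * (8 * K + 1)" unfolding n K_def by (simp add: algebra_simps)
  then have "n choose 2 = 8 * K + 1" by (simp add: choose_two)
  then show ?thesis by simp
qed

lemma nine_le_card_leave:
  fixes n :: nat
  assumes "n mod 16 = 15" "packing8 {..<n} C L"
  shows "9 \<le> card L"
proof -
  have "card L mod 8 = 1"
    using card_leave_packing8[OF assms(2)] choose_two_mod_8[OF assms(1)] by (simp; presburger)
  moreover have "card L \<noteq> 1"
    using card_leave_ne_1[OF assms(2)] assms(1) by (simp; presburger)
  ultimately show ?thesis by presburger
qed

section \<open>Relabelling vertices\<close>

definition map_edges :: "('a \<Rightarrow> 'b) \<Rightarrow> 'a set set \<Rightarrow> 'b set set" where
  "map_edges g G = (\<lambda>e. g ` e) ` G"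

lemma Union_map_edges: "\<Union>(map_edges g G) = g ` \<Union>G"
  unfolding map_edges_def by auto

lemma map_edges_Union: "map_edges g (\<Union>\<A>) = (\<Union>A\<in>\<A>. map_edges g A)"
  unfolding map_edges_def by blast

lemma map_edges_disjoint:
  assumes "inj_on g V" "\<Union>G \<subseteq> V" "\<Union>H \<subseteq> V" "G \<inter> H = {}"
  shows "map_edges g G \<inter> map_edges g H = {}"
proof -
  have "g ` e \<noteq> g ` e'" if "e \<in> G" "e' \<in> H" for e e'
  proof -
    have "e \<subseteq> V" "e' \<subseteq> V" "e \<noteq> e'" using that assms(2-4) by auto
    then show ?thesis by (simp add: inj_on_image_eq_iff[OF assms(1)])
  qed
  then show ?thesis unfolding map_edges_def by blast
qed

lemma map_edges_Diff:
  assumes "inj_on g V" "\<Union>G \<subseteq> V" "\<Union>H \<subseteq> V"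
  shows "map_edges g (G - H) = map_edges g G - map_edges g H"
  unfolding map_edges_def using assms(2,3)
  by (intro inj_on_image_set_diff[OF inj_on_image_Pow[OF assms(1)]]) auto

lemma map_edges_kedges:
  assumes "inj_on g A"
  shows "map_edges g (kedges A) = kedges (g ` A)"
proof (intro set_eqI iffI)
  fix e' assume "e' \<in> map_edges g (kedges A)"
  then obtain e where e: "e \<subseteq> A" "card e = 2" "e' = g ` e" unfolding map_edges_def kedges_def by blast
  then have "card e' = 2" using card_image[OF inj_on_subset[OF assms e(1)]] by simp
  then show "e' \<in> kedges (g ` A)" using e unfolding kedges_def by blast
next
  fix e' assume "e' \<in> kedges (g ` A)"
  then obtain e where e: "e \<subseteq> A" "e' = g ` e" "card e' = 2"
    unfolding kedges_def by (auto simp: subset_image_iff)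
  then have "card e = 2" using card_image[OF inj_on_subset[OF assms e(1)]] by simp
  then show "e' \<in> map_edges g (kedges A)" using e unfolding map_edges_def kedges_def by blast
qed

lemma map_edges_biclique: "map_edges g (biclique A B) = biclique (g ` A) (g ` B)"
  unfolding map_edges_def biclique_def by blast

lemma cycle8_map_edges:
  assumes "cycle8 X c" "inj_on g (\<Union>c)"
  shows "cycle8 (g ` X) (map_edges g c)"
proof -
  obtain v where v: "inj_on v {..<8}" "v ` {..<8} \<subseteq> X"
    "c = (\<lambda>i. {v i, v (Suc i mod 8)}) ` {..<8}"
    by (rule cycle8_edges[OF assms(1)])
  have "v ` {..<8} \<subseteq> \<Union>c" unfolding v(3) by auto
  then have "inj_on (g \<circ> v) {..<8}" by (rule comp_inj_on[OF v(1) inj_on_subset[OF assms(2)]])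
  moreover have "(g \<circ> v) ` {..<8} \<subseteq> g ` X" using v(2) by auto
  moreover have "map_edges g c = (\<lambda>i. {(g \<circ> v) i, (g \<circ> v) (Suc i mod 8)}) ` {..<8}"
    unfolding v(3) map_edges_def image_image by (simp only: image_insert image_empty comp_apply)
  ultimately show ?thesis by (rule cycle8I)
qed

lemma inside8_map_edges:
  assumes "inside8 c c'" "inj_on g (\<Union>c)"
  shows "inside8 (map_edges g c) (map_edges g c')"
proof -
  have c': "cycle8 (\<Union>c) c'" "\<Union>c' = \<Union>c" "c \<inter> c' = {}"
    using assms(1) unfolding inside8_def by auto
  have "map_edges g c \<inter> map_edges g c' = {}"
    using map_edges_disjoint[OF assms(2) subset_refl] c' by simp
  then show ?thesis
    using cycle8_map_edges[OF c'(1)] assms(2) c'(2)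
    unfolding inside8_def Union_map_edges by simp
qed

lemma obtain_enumeration_Un:
  fixes A B :: "'a set"
  assumes "finite A" "finite B" "A \<inter> B = {}"
  obtains g :: "nat \<Rightarrow> 'a" where "inj_on g {..<card A + card B}" "g ` {..<card A} = A"
    "g ` {card A..<card A + card B} = B"
proof -
  obtain xs where xs: "set xs = A" "distinct xs" using finite_distinct_list[OF assms(1)] by blast
  obtain ys where ys: "set ys = B" "distinct ys" using finite_distinct_list[OF assms(2)] by blast
  have len: "length xs = card A" "length ys = card B"
    using distinct_card[OF xs(2)] distinct_card[OF ys(2)] xs(1) ys(1) by simp_all
  have "inj_on (nth (xs @ ys)) {..<card A + card B}"
    by (rule inj_on_nth) (use xs ys assms(3) len in auto)
  moreover have "nth (xs @ ys) ` {..<card A} = A"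
    using nth_image[of "card A" "xs @ ys"] len xs(1) by (simp add: lessThan_atLeast0)
  moreover have "nth (xs @ ys) ` {card A..<card A + card B} = B"
  proof -
    have "{card A..<card A + card B} = (\<lambda>n. length xs + n) ` {0..<card B}"
      using len by (simp add: add.commute)
    then have "nth (xs @ ys) ` {card A..<card A + card B} = (\<lambda>n. (xs @ ys) ! (length xs + n)) ` {0..<card B}"
      by (simp only: image_image)
    also have "\<dots> = nth ys ` {0..<length ys}" by (simp only: nth_append_length_plus) (simp only: len)
    finally show ?thesis using nth_image[of "length ys" ys] ys(1) by simp
  qed
  ultimately show ?thesis using that by blast
qed

section \<open>Paired decompositions\<close>

text \<open>A decomposition of the edge set G into 8-cycles, each paired with one of its inside 8-cycles
  so that the inside cycles decompose G as well; it is the local form of an almost 2-perfect packing.\<close>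
definition paired_decomp8 :: "'a set set \<Rightarrow> ('a set set \<times> 'a set set) set \<Rightarrow> bool" where
  "paired_decomp8 G P \<longleftrightarrow>
     (\<forall>p\<in>P. cycle8 UNIV (fst p) \<and> inside8 (fst p) (snd p)) \<and>
     (\<forall>p\<in>P. \<forall>q\<in>P. p \<noteq> q \<longrightarrow> fst p \<inter> fst q = {} \<and> snd p \<inter> snd q = {}) \<and>
     \<Union>(fst ` P) = G \<and> \<Union>(snd ` P) = G"

definition paired_decomposable8 :: "'a set set \<Rightarrow> bool" where
  "paired_decomposable8 G \<longleftrightarrow> (\<exists>P. paired_decomp8 G P)"

lemma paired_decomp8I:
  assumes "\<And>p. p \<in> P \<Longrightarrow> cycle8 UNIV (fst p) \<and> inside8 (fst p) (snd p)"
    and "\<And>p q. p \<in> P \<Longrightarrow> q \<in> P \<Longrightarrow> p \<noteq> q \<Longrightarrow> fst p \<inter> fst q = {} \<and> snd p \<inter> snd q = {}"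
    and "\<Union>(fst ` P) = G" "\<Union>(snd ` P) = G"
  shows "paired_decomp8 G P"
  using assms unfolding paired_decomp8_def by auto

lemma
  assumes "paired_decomp8 G P"
  shows paired_decomp8_inside: "p \<in> P \<Longrightarrow> cycle8 UNIV (fst p) \<and> inside8 (fst p) (snd p)"
    and paired_decomp8_disjoint:
      "p \<in> P \<Longrightarrow> q \<in> P \<Longrightarrow> p \<noteq> q \<Longrightarrow> fst p \<inter> fst q = {} \<and> snd p \<inter> snd q = {}"
    and paired_decomp8_Union: "\<Union>(fst ` P) = G" "\<Union>(snd ` P) = G"
  using assms unfolding paired_decomp8_def by auto

lemma paired_decomp8_UN:
  assumes dec: "\<And>i. i \<in> I \<Longrightarrow> paired_decomp8 (G i) (P i)" and disj: "disjoint_family_on G I"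
  shows "paired_decomp8 (\<Union>i\<in>I. G i) (\<Union>i\<in>I. P i)"
proof (rule paired_decomp8I)
  fix p assume "p \<in> (\<Union>i\<in>I. P i)"
  then obtain i where "i \<in> I" "p \<in> P i" by blast
  then show "cycle8 UNIV (fst p) \<and> inside8 (fst p) (snd p)"
    using paired_decomp8_inside[OF dec] by blast
next
  fix p q assume p: "p \<in> (\<Union>i\<in>I. P i)" and q: "q \<in> (\<Union>i\<in>I. P i)" and "p \<noteq> q"
  then obtain i j where i: "i \<in> I" "p \<in> P i" and j: "j \<in> I" "q \<in> P j" by blast
  show "fst p \<inter> fst q = {} \<and> snd p \<inter> snd q = {}"
  proof (cases "i = j")
    case True
    then show ?thesis using paired_decomp8_disjoint[OF dec[OF i(1)] i(2)] j(2) \<open>p \<noteq> q\<close> by blast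
  next
    case False
    have "fst p \<subseteq> G i" "snd p \<subseteq> G i"
      using paired_decomp8_Union[OF dec[OF i(1)]] i(2) by auto
    moreover have "fst q \<subseteq> G j" "snd q \<subseteq> G j"
      using paired_decomp8_Union[OF dec[OF j(1)]] j(2) by auto
    moreover have "G i \<inter> G j = {}" using disj i(1) j(1) False unfolding disjoint_family_on_def by blast
    ultimately show ?thesis by blast
  qed
next
  have "\<Union>(fst ` (\<Union>i\<in>I. P i)) = (\<Union>i\<in>I. \<Union>(fst ` P i))" by blast
  also have "\<dots> = (\<Union>i\<in>I. G i)" using paired_decomp8_Union(1)[OF dec] by (intro SUP_cong) auto
  finally show "\<Union>(fst ` (\<Union>i\<in>I. P i)) = (\<Union>i\<in>I. G i)" .
  have "\<Union>(snd ` (\<Union>i\<in>I. P i)) = (\<Union>i\<in>I. \<Union>(snd ` P i))" by blast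
  also have "\<dots> = (\<Union>i\<in>I. G i)" using paired_decomp8_Union(2)[OF dec] by (intro SUP_cong) auto
  finally show "\<Union>(snd ` (\<Union>i\<in>I. P i)) = (\<Union>i\<in>I. G i)" .
qed

lemma paired_decomposable8_UN:
  assumes "\<And>i. i \<in> I \<Longrightarrow> paired_decomposable8 (G i)" "disjoint_family_on G I"
  shows "paired_decomposable8 (\<Union>i\<in>I. G i)"
proof -
  have "\<forall>i\<in>I. \<exists>P. paired_decomp8 (G i) P"
    using assms(1) unfolding paired_decomposable8_def by blast
  from bchoice[OF this] obtain P where "\<forall>i\<in>I. paired_decomp8 (G i) (P i)" by blast
  then show ?thesis
    using paired_decomp8_UN[OF _ assms(2)] unfolding paired_decomposable8_def by blast
qed

lemma paired_decomposable8_Un: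
  assumes "paired_decomposable8 G" "paired_decomposable8 H" "G \<inter> H = {}"
  shows "paired_decomposable8 (G \<union> H)"
proof -
  have "paired_decomposable8 (\<Union>b\<in>UNIV. if b then G else H)"
    using assms by (intro paired_decomposable8_UN) (auto simp: disjoint_family_on_def)
  moreover have "(\<Union>b\<in>UNIV. if b then G else H) = G \<union> H" by (auto split: if_splits)
  ultimately show ?thesis by simp
qed

lemma paired_decomp8_map_edges:
  assumes dec: "paired_decomp8 G P" and inj: "inj_on g (\<Union>G)"
  shows "paired_decomp8 (map_edges g G) (map_prod (map_edges g) (map_edges g) ` P)"
proof -
  have sub: "\<Union>(fst p) \<subseteq> \<Union>G" "\<Union>(snd p) \<subseteq> \<Union>G" if "p \<in> P" for p
  proof -
    have "fst p \<subseteq> \<Union>(fst ` P)" "snd p \<subseteq> \<Union>(snd ` P)" using that by auto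
    then show "\<Union>(fst p) \<subseteq> \<Union>G" "\<Union>(snd p) \<subseteq> \<Union>G"
      unfolding paired_decomp8_Union[OF dec] by auto
  qed
  have inj_p: "inj_on g (\<Union>(fst p))" if "p \<in> P" for p
    using inj_on_subset[OF inj sub(1)[OF that]] .
  show ?thesis
  proof (rule paired_decomp8I)
    fix p' assume "p' \<in> map_prod (map_edges g) (map_edges g) ` P"
    then obtain p where p: "p' = map_prod (map_edges g) (map_edges g) p" "p \<in> P" by (rule imageE)
    have "cycle8 UNIV (fst p)" "inside8 (fst p) (snd p)"
      using paired_decomp8_inside[OF dec p(2)] by auto
    then have "cycle8 UNIV (map_edges g (fst p))" "inside8 (map_edges g (fst p)) (map_edges g (snd p))"
      using cycle8_restrict[OF cycle8_map_edges[OF _ inj_p[OF p(2)]]] inside8_map_edges[OF _ inj_p[OF p(2)]]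
      by auto
    then show "cycle8 UNIV (fst p') \<and> inside8 (fst p') (snd p')" using p(1) by simp
  next
    fix p' q' assume p': "p' \<in> map_prod (map_edges g) (map_edges g) ` P"
      and q': "q' \<in> map_prod (map_edges g) (map_edges g) ` P" and "p' \<noteq> q'"
    obtain p where p: "p' = map_prod (map_edges g) (map_edges g) p" "p \<in> P"
      using p' by (rule imageE)
    obtain q where q: "q' = map_prod (map_edges g) (map_edges g) q" "q \<in> P"
      using q' by (rule imageE)
    have "p \<noteq> q" using \<open>p' \<noteq> q'\<close> p(1) q(1) by blast
    then have "fst p \<inter> fst q = {}" "snd p \<inter> snd q = {}"
      using paired_decomp8_disjoint[OF dec p(2) q(2)] by auto
    then show "fst p' \<inter> fst q' = {} \<and> snd p' \<inter> snd q' = {}"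
      using map_edges_disjoint[OF inj sub(1)[OF p(2)] sub(1)[OF q(2)]]
        map_edges_disjoint[OF inj sub(2)[OF p(2)] sub(2)[OF q(2)]] p(1) q(1)
      by simp
  next
    have "\<Union>(fst ` map_prod (map_edges g) (map_edges g) ` P) = map_edges g (\<Union>(fst ` P))"
      by (simp add: map_edges_Union image_image)
    then show "\<Union>(fst ` map_prod (map_edges g) (map_edges g) ` P) = map_edges g G"
      using paired_decomp8_Union(1)[OF dec] by simp
    have "\<Union>(snd ` map_prod (map_edges g) (map_edges g) ` P) = map_edges g (\<Union>(snd ` P))"
      by (simp add: map_edges_Union image_image)
    then show "\<Union>(snd ` map_prod (map_edges g) (map_edges g) ` P) = map_edges g G"
      using paired_decomp8_Union(2)[OF dec] by simp
  qed
qed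

lemma paired_decomposable8_map_edges:
  "paired_decomposable8 G \<Longrightarrow> inj_on g (\<Union>G) \<Longrightarrow> paired_decomposable8 (map_edges g G)"
  unfolding paired_decomposable8_def using paired_decomp8_map_edges by blast

lemma packing8_if_partition:
  assumes "\<forall>c\<in>\<C>. cycle8 UNIV c" "pairwise (\<lambda>a b. a \<inter> b = {}) \<C>" "\<Union>\<C> = kedges X - L"
    "L \<subseteq> kedges X"
  shows "packing8 X \<C> L"
proof -
  have "cycle8 X c" if "c \<in> \<C>" for c
  proof (rule cycle8_restrict)
    show "cycle8 UNIV c" using assms(1) that by blast
    show "\<Union>c \<subseteq> X" using assms(3) that unfolding kedges_def by blast
  qed
  then show ?thesis using assms unfolding packing8_def by blast
qed

lemma almost_2perfect8_if_paired_decomp8: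
  assumes dec: "paired_decomp8 (kedges X - L) P" and L: "L \<subseteq> kedges X"
  shows "packing8 X (fst ` P) L \<and> almost_2perfect8 X (fst ` P) L"
proof -
  have cyc: "cycle8 UNIV (fst p)" "inside8 (fst p) (snd p)" if "p \<in> P" for p
    using paired_decomp8_inside[OF dec that] by auto
  have disj: "fst p \<inter> fst q = {}" "snd p \<inter> snd q = {}" if "p \<in> P" "q \<in> P" "p \<noteq> q" for p q
    using paired_decomp8_disjoint[OF dec that] by auto
  have inj: "inj_on fst P"
  proof (rule inj_onI)
    fix p q assume p: "p \<in> P" and q: "q \<in> P" and eq: "fst p = fst q"
    have "fst p \<noteq> {}" using card_cycle8[OF cyc(1)[OF p]] by auto
    with eq have "fst p \<inter> fst q \<noteq> {}" by simp
    then show "p = q" using disj(1)[OF p q] by blast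
  qed
  define f where "f c = snd (the_inv_into P fst c)" for c
  have f: "f (fst p) = snd p" if "p \<in> P" for p
    unfolding f_def using the_inv_into_f_f[OF inj that] by simp
  have "packing8 X (fst ` P) L"
  proof (rule packing8_if_partition[OF _ _ _ L])
    show "\<forall>c\<in>fst ` P. cycle8 UNIV c" using cyc(1) by blast
    show "pairwise (\<lambda>a b. a \<inter> b = {}) (fst ` P)"
      unfolding pairwise_def using disj(1) by fastforce
    show "\<Union>(fst ` P) = kedges X - L" by (rule paired_decomp8_Union(1)[OF dec])
  qed
  moreover have "packing8 X (f ` fst ` P) L"
  proof -
    have "f ` fst ` P = snd ` P" unfolding image_image using f by simp
    moreover have "packing8 X (snd ` P) L"
    proof (rule packing8_if_partition[OF _ _ _ L])
      show "\<forall>c\<in>snd ` P. cycle8 UNIV c"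
        using cyc(2) cycle8_restrict unfolding inside8_def by blast
      show "pairwise (\<lambda>a b. a \<inter> b = {}) (snd ` P)"
        unfolding pairwise_def using disj(2) by fastforce
      show "\<Union>(snd ` P) = kedges X - L" by (rule paired_decomp8_Union(2)[OF dec])
    qed
    ultimately show ?thesis by simp
  qed
  moreover have "\<forall>c\<in>fst ` P. inside8 c (f c)" using cyc(2) f by simp
  ultimately show ?thesis unfolding almost_2perfect8_def by blast
qed

section \<open>Certificates checked by evaluation\<close>

definition edge_code :: "nat \<Rightarrow> nat \<Rightarrow> nat" where
  "edge_code x y = min x y * 64 + max x y"

definition code_edge :: "nat \<Rightarrow> nat set" where
  "code_edge c = {c div 64, c mod 64}"

definition edge_codes :: "nat set" where
  "edge_codes = {c. c div 64 < c mod 64}"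

lemma code_edge_edge_code:
  "x < 64 \<Longrightarrow> y < 64 \<Longrightarrow> x \<noteq> y \<Longrightarrow> code_edge (edge_code x y) = {x, y} \<and> edge_code x y \<in> edge_codes"
  unfolding code_edge_def edge_code_def edge_codes_def by (auto simp: min_def max_def)

lemma inj_on_code_edge: "inj_on code_edge edge_codes"
proof (rule inj_onI)
  fix c d assume "c \<in> edge_codes" "d \<in> edge_codes" "code_edge c = code_edge d"
  then have "c div 64 = d div 64" "c mod 64 = d mod 64"
    unfolding code_edge_def edge_codes_def by (auto simp: doubleton_eq_iff)
  then show "c = d" by (metis div_mult_mod_eq)
qed

fun cycle_codes :: "nat list \<Rightarrow> nat list" where
  "cycle_codes [a0, a1, a2, a3, a4, a5, a6, a7] =
     [edge_code a0 a1, edge_code a1 a2, edge_code a2 a3, edge_code a3 a4,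
      edge_code a4 a5, edge_code a5 a6, edge_code a6 a7, edge_code a7 a0]"
| "cycle_codes _ = []"

definition list_cycle :: "nat list \<Rightarrow> nat set set" where
  "list_cycle a = (\<lambda>i. {a ! i, a ! (Suc i mod 8)}) ` {..<8}"

lemma cycle8_list_cycle: "length a = 8 \<Longrightarrow> distinct a \<Longrightarrow> cycle8 (set a) (list_cycle a)"
  unfolding list_cycle_def by (rule cycle8I) (auto simp: inj_on_nth)

lemma Union_list_cycle:
  assumes "length a = 8"
  shows "\<Union>(list_cycle a) = set a"
proof
  show "\<Union>(list_cycle a) \<subseteq> set a" using assms unfolding list_cycle_def by auto
  show "set a \<subseteq> \<Union>(list_cycle a)" using assms unfolding list_cycle_def by (auto simp: in_set_conv_nth)
qed

lemma list_cycle_eq_codes: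
  assumes "length a = 8" "distinct a" "\<forall>v\<in>set a. v < 64"
  shows "list_cycle a = code_edge ` set (cycle_codes a) \<and> set (cycle_codes a) \<subseteq> edge_codes"
proof -
  obtain a0 a1 a2 a3 a4 a5 a6 a7 where a: "a = [a0, a1, a2, a3, a4, a5, a6, a7]"
    using assms(1) by (simp add: numeral_eq_Suc length_Suc_conv) blast
  have "{..<8::nat} = {0, 1, 2, 3, 4, 5, 6, 7}" by (auto simp: numeral_eq_Suc)
  then have "list_cycle a = {{a0, a1}, {a1, a2}, {a2, a3}, {a3, a4}, {a4, a5}, {a5, a6}, {a6, a7}, {a7, a0}}"
    unfolding list_cycle_def a by simp
  moreover have "a0 < 64" "a1 < 64" "a2 < 64" "a3 < 64" "a4 < 64" "a5 < 64" "a6 < 64" "a7 < 64"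
    "a0 \<noteq> a1" "a1 \<noteq> a2" "a2 \<noteq> a3" "a3 \<noteq> a4" "a4 \<noteq> a5" "a5 \<noteq> a6" "a6 \<noteq> a7" "a7 \<noteq> a0"
    using assms(2,3) unfolding a by auto
  ultimately show ?thesis unfolding a using code_edge_edge_code by simp
qed

fun merge :: "nat list \<Rightarrow> nat list \<Rightarrow> nat list" where
  "merge [] ys = ys"
| "merge xs [] = xs"
| "merge (x # xs) (y # ys) = (if x \<le> y then x # merge xs (y # ys) else y # merge (x # xs) ys)"

function msort :: "nat list \<Rightarrow> nat list" where
  "msort [] = []"
| "msort [x] = [x]"
| "msort (x # y # zs) = merge (msort (take (Suc (Suc (length zs)) div 2) (x # y # zs)))
                              (msort (drop (Suc (Suc (length zs)) div 2) (x # y # zs)))"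
  by pat_completeness auto
termination by (relation "measure length") auto

lemma set_merge: "set (merge xs ys) = set xs \<union> set ys"
  by (induction xs ys rule: merge.induct) auto

lemma length_merge: "length (merge xs ys) = length xs + length ys"
  by (induction xs ys rule: merge.induct) auto

lemma set_length_msort: "set (msort xs) = set xs \<and> length (msort xs) = length xs"
proof (induction xs rule: msort.induct)
  case (3 x y zs)
  let ?k = "Suc (Suc (length zs)) div 2"
  have "set (msort (x # y # zs)) = set (take ?k (x # y # zs)) \<union> set (drop ?k (x # y # zs))"
    using 3 by (simp only: msort.simps set_merge)
  also have "\<dots> = set (x # y # zs)" by (metis append_take_drop_id set_append)
  finally have "set (msort (x # y # zs)) = set (x # y # zs)" .
  moreover have "length (msort (x # y # zs)) = length (x # y # zs)"
    using 3 by (simp only: msort.simps length_merge) simp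
  ultimately show ?case by blast
qed auto

lemma distinct_if_msort_eq:
  assumes "msort xs = E" "sorted_wrt (<) E"
  shows "distinct xs \<and> set xs = set E"
proof -
  have "distinct E" using assms(2) by (simp add: strict_sorted_iff)
  moreover have "set xs = set E" "length xs = length E" using set_length_msort[of xs] assms(1) by auto
  ultimately show ?thesis using card_distinct distinct_card by metis
qed

text \<open>Edges are coded as numbers so that the simplifier can verify, by sorting, that the outer cycles
  and also the inner cycles partition the edge set coded by E.\<close>
definition cert_ok :: "(nat list \<times> nat list) list \<Rightarrow> nat list \<Rightarrow> bool" where
  "cert_ok D E \<longleftrightarrow>
     list_all (\<lambda>(a, b). length a = 8 \<and> distinct a \<and> length b = 8 \<and> distinct b \<and>
       set a \<subseteq> set b \<and> set b \<subseteq> set a \<and> list_all (\<lambda>v. v < 64) a \<and>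
       list_all (\<lambda>c. c \<notin> set (cycle_codes b)) (cycle_codes a)) D \<and>
     sorted_wrt (<) E \<and>
     msort (concat (map (cycle_codes \<circ> fst) D)) = E \<and> msort (concat (map (cycle_codes \<circ> snd) D)) = E"

definition cert_pairs :: "(nat list \<times> nat list) list \<Rightarrow> (nat set set \<times> nat set set) set" where
  "cert_pairs D = map_prod list_cycle list_cycle ` set D"

lemma distinct_concat_map_disjoint:
  "distinct (concat (map f xs)) \<Longrightarrow> x \<in> set xs \<Longrightarrow> y \<in> set xs \<Longrightarrow> x \<noteq> y \<Longrightarrow> set (f x) \<inter> set (f y) = {}"
  by (induction xs) auto

lemma paired_decomp8_cert_pairs:
  assumes "cert_ok D E"
  shows "paired_decomp8 (code_edge ` set E) (cert_pairs D)"
proof -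
  have pair: "length a = 8 \<and> distinct a \<and> length b = 8 \<and> distinct b \<and> set a = set b \<and>
      (\<forall>v\<in>set a. v < 64) \<and> set (cycle_codes a) \<inter> set (cycle_codes b) = {}" if "(a, b) \<in> set D" for a b
    using assms that unfolding cert_ok_def list_all_iff by fastforce
  have codes: "list_cycle a = code_edge ` set (cycle_codes a)" "set (cycle_codes a) \<subseteq> edge_codes"
    "list_cycle b = code_edge ` set (cycle_codes b)" "set (cycle_codes b) \<subseteq> edge_codes"
    if "(a, b) \<in> set D" for a b
    using list_cycle_eq_codes[of a] list_cycle_eq_codes[of b] pair[OF that] by auto
  have code_Int: "code_edge ` X \<inter> code_edge ` Y = code_edge ` (X \<inter> Y)"
    if "X \<subseteq> edge_codes" "Y \<subseteq> edge_codes" for X Y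
    using inj_on_image_Int[OF inj_on_code_edge that] by simp
  have partition: "distinct (concat (map (cycle_codes \<circ> fst) D))" "set (concat (map (cycle_codes \<circ> fst) D)) = set E"
    "distinct (concat (map (cycle_codes \<circ> snd) D))" "set (concat (map (cycle_codes \<circ> snd) D)) = set E"
    using assms distinct_if_msort_eq unfolding cert_ok_def by metis+
  show ?thesis
  proof (rule paired_decomp8I)
    fix p assume "p \<in> cert_pairs D"
    then obtain a b where ab: "(a, b) \<in> set D" "p = (list_cycle a, list_cycle b)"
      unfolding cert_pairs_def by auto
    note ab_ok = pair[OF ab(1)]
    have "cycle8 UNIV (list_cycle a)"
      using cycle8_restrict[OF cycle8_list_cycle] ab_ok by blast
    moreover have "cycle8 (\<Union>(list_cycle a)) (list_cycle b)" "\<Union>(list_cycle b) = \<Union>(list_cycle a)"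
      using cycle8_list_cycle[of b] Union_list_cycle ab_ok by auto
    moreover have "list_cycle a \<inter> list_cycle b = {}"
      using codes[OF ab(1)] code_Int ab_ok by simp
    ultimately show "cycle8 UNIV (fst p) \<and> inside8 (fst p) (snd p)"
      unfolding ab(2) inside8_def by simp
  next
    fix p q assume p: "p \<in> cert_pairs D" and q: "q \<in> cert_pairs D" and "p \<noteq> q"
    obtain x where x: "p = map_prod list_cycle list_cycle x" "x \<in> set D"
      using p unfolding cert_pairs_def by (rule imageE)
    obtain y where y: "q = map_prod list_cycle list_cycle y" "y \<in> set D"
      using q unfolding cert_pairs_def by (rule imageE)
    have xy: "x \<in> set D" "y \<in> set D" "x \<noteq> y"
      "p = (list_cycle (fst x), list_cycle (snd x))" "q = (list_cycle (fst y), list_cycle (snd y))"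
      using x y \<open>p \<noteq> q\<close> by (auto simp: map_prod_def split: prod.splits)
    have "set (cycle_codes (fst x)) \<inter> set (cycle_codes (fst y)) = {}"
      "set (cycle_codes (snd x)) \<inter> set (cycle_codes (snd y)) = {}"
      using distinct_concat_map_disjoint[OF partition(1) xy(1-3)] distinct_concat_map_disjoint[OF partition(3) xy(1-3)]
      by simp_all
    then show "fst p \<inter> fst q = {} \<and> snd p \<inter> snd q = {}"
      using codes[of "fst x" "snd x"] codes[of "fst y" "snd y"] code_Int xy by simp
  next
    have "\<Union>(fst ` cert_pairs D) = (\<Union>x\<in>set D. code_edge ` set (cycle_codes (fst x)))"
      unfolding cert_pairs_def using codes by (auto simp: image_image)
    also have "\<dots> = code_edge ` set E"
      by (simp only: image_UN[symmetric]) (use partition(2) in simp)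
    finally show "\<Union>(fst ` cert_pairs D) = code_edge ` set E" .
    have "\<Union>(snd ` cert_pairs D) = (\<Union>x\<in>set D. code_edge ` set (cycle_codes (snd x)))"
      unfolding cert_pairs_def using codes by (auto simp: image_image)
    also have "\<dots> = code_edge ` set E"
      by (simp only: image_UN[symmetric]) (use partition(4) in simp)
    finally show "\<Union>(snd ` cert_pairs D) = code_edge ` set E" .
  qed
qed

lemma paired_decomposable8_code_edges:
  assumes "cert_ok D E"
  shows "paired_decomposable8 (code_edge ` set E)"
  unfolding paired_decomposable8_def using paired_decomp8_cert_pairs[OF assms] by blast

definition codes_upto :: "nat \<Rightarrow> (nat \<Rightarrow> nat \<Rightarrow> bool) \<Rightarrow> nat list" where
  "codes_upto b P = [x * 64 + y. x \<leftarrow> [0..<b], y \<leftarrow> [Suc x..<b], P x y]"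

lemma mem_codes_upto:
  "c \<in> set (codes_upto b P) \<longleftrightarrow>
    (\<exists>x y. x < y \<and> y < b \<and> P x y \<and> c = x * 64 + y)"
  unfolding codes_upto_def
proof
  assume "c \<in> set [x * 64 + y. x \<leftarrow> [0..<b], y \<leftarrow> [Suc x..<b], P x y]"
  then show "\<exists>x y. x < y \<and> y < b \<and> P x y \<and> c = x * 64 + y" by (force simp: Suc_le_eq)
next
  assume "\<exists>x y. x < y \<and> y < b \<and> P x y \<and> c = x * 64 + y"
  then obtain x y where "x < y" "y < b" "P x y" "c = x * 64 + y" by blast
  then show "c \<in> set [x * 64 + y. x \<leftarrow> [0..<b], y \<leftarrow> [Suc x..<b], P x y]"
    by (force simp: Suc_le_eq)
qed

lemma
  assumes "b \<le> 64"
  shows code_edge_codes_upto: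
      "code_edge ` set (codes_upto b P) =
        {{x, y} | x y. x < y \<and> y < b \<and> P x y}"
    and codes_upto_subset: "set (codes_upto b P) \<subseteq> edge_codes"
proof -
  have code: "code_edge (x * 64 + y) = {x, y}" "x * 64 + y \<in> edge_codes" if "x < y" "y < b" for x y
  proof -
    have "(x * 64 + y) div 64 = x" "(x * 64 + y) mod 64 = y" using that assms by simp_all
    then show "code_edge (x * 64 + y) = {x, y}" "x * 64 + y \<in> edge_codes"
      using that unfolding code_edge_def edge_codes_def by simp_all
  qed
  show "code_edge ` set (codes_upto b P) =
      {{x, y} | x y. x < y \<and> y < b \<and> P x y}"
  proof (intro set_eqI iffI)
    fix e assume "e \<in> code_edge ` set (codes_upto b P)"
    then obtain c where c: "c \<in> set (codes_upto b P)"
      "e = code_edge c" by (rule imageE) simp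
    from c(1) obtain x y where xy: "x < y" "y < b" "P x y" "c = x * 64 + y"
      unfolding mem_codes_upto by blast
    then have "e = {x, y}" using c(2) code(1) by simp
    with xy show "e \<in> {{x, y} | x y. x < y \<and> y < b \<and> P x y}" by blast
  next
    fix e assume "e \<in> {{x, y} | x y. x < y \<and> y < b \<and> P x y}"
    then obtain x y where xy: "x < y" "y < b" "P x y" "e = {x, y}" by blast
    have "e = code_edge (x * 64 + y)" using code(1) xy by simp
    moreover have "x * 64 + y \<in> set (codes_upto b P)"
      unfolding mem_codes_upto using xy by blast
    ultimately show "e \<in> code_edge ` set (codes_upto b P)"
      by (rule image_eqI)
  qed
  show "set (codes_upto b P) \<subseteq> edge_codes"
  proof
    fix c assume "c \<in> set (codes_upto b P)"
    then obtain x y where "x < y" "y < b" "c = x * 64 + y" unfolding mem_codes_upto by blast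
    then show "c \<in> edge_codes" using code(2) by simp
  qed
qed

section \<open>The base cases\<close>

definition cert_K15 :: "(nat list \<times> nat list) list" where
  "cert_K15 =
    [([1, 8, 5, 7, 2, 14, 11, 4], [14, 1, 7, 4, 8, 11, 2, 5]),
     ([2, 6, 3, 8, 0, 12, 9, 5], [12, 2, 8, 5, 6, 9, 0, 3]),
     ([0, 7, 4, 6, 1, 13, 10, 3], [13, 0, 6, 3, 7, 10, 1, 4]),
     ([2, 9, 13, 14, 7, 3, 12, 10], [2, 3, 9, 7, 12, 14, 10, 13]),
     ([0, 10, 14, 12, 8, 4, 13, 11], [0, 4, 10, 8, 13, 12, 11, 14]),
     ([1, 11, 12, 13, 6, 5, 14, 9], [1, 5, 11, 6, 14, 13, 9, 12]),
     ([1, 14, 8, 2, 3, 9, 7, 10], [9, 8, 1, 3, 14, 7, 2, 10]),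
     ([2, 12, 6, 0, 4, 10, 8, 11], [10, 6, 2, 4, 12, 8, 0, 11]),
     ([0, 13, 7, 1, 5, 11, 6, 9], [11, 7, 0, 5, 13, 6, 1, 9]),
     ([2, 4, 14, 3, 11, 9, 8, 13], [8, 14, 2, 9, 4, 11, 13, 3]),
     ([0, 5, 12, 4, 9, 10, 6, 14], [6, 12, 0, 10, 5, 9, 14, 4]),
     ([1, 3, 13, 5, 10, 11, 7, 12], [7, 13, 1, 11, 3, 10, 12, 5])]"

definition cert_K23_minus_K7 :: "(nat list \<times> nat list) list" where
  "cert_K23_minus_K7 =
    [([6, 19, 16, 10, 17, 8, 9, 21], [21, 16, 17, 6, 9, 19, 10, 8]),
     ([7, 20, 17, 11, 18, 9, 10, 22], [22, 17, 18, 7, 10, 20, 11, 9]),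
     ([8, 21, 18, 12, 19, 10, 11, 6], [6, 18, 19, 8, 11, 21, 12, 10]),
     ([9, 22, 19, 13, 20, 11, 12, 7], [7, 19, 20, 9, 12, 22, 13, 11]),
     ([10, 6, 20, 14, 21, 12, 13, 8], [8, 20, 21, 10, 13, 6, 14, 12]),
     ([11, 7, 21, 15, 22, 13, 14, 9], [9, 21, 22, 11, 14, 7, 15, 13]),
     ([12, 8, 22, 16, 6, 14, 15, 10], [10, 22, 6, 12, 15, 8, 16, 14]),
     ([13, 9, 6, 17, 7, 15, 16, 11], [11, 6, 7, 13, 16, 9, 17, 15]),
     ([14, 10, 7, 18, 8, 16, 17, 12], [12, 7, 8, 14, 17, 10, 18, 16]),
     ([15, 11, 8, 19, 9, 17, 18, 13], [13, 8, 9, 15, 18, 11, 19, 17]),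
     ([16, 12, 9, 20, 10, 18, 19, 14], [14, 9, 10, 16, 19, 12, 20, 18]),
     ([17, 13, 10, 21, 11, 19, 20, 15], [15, 10, 11, 17, 20, 13, 21, 19]),
     ([18, 14, 11, 22, 12, 20, 21, 16], [16, 11, 12, 18, 21, 14, 22, 20]),
     ([19, 15, 12, 6, 13, 21, 22, 17], [17, 12, 13, 19, 22, 15, 6, 21]),
     ([20, 16, 13, 7, 14, 22, 6, 18], [18, 13, 14, 20, 6, 16, 7, 22]),
     ([21, 17, 14, 8, 15, 6, 7, 19], [19, 14, 15, 21, 7, 17, 8, 6]),
     ([22, 18, 15, 9, 16, 7, 8, 20], [20, 15, 16, 22, 8, 18, 9, 7]),
     ([0, 14, 2, 15, 1, 10, 3, 20], [0, 15, 3, 14, 1, 20, 2, 10]),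
     ([0, 11, 2, 16, 1, 7, 3, 21], [0, 16, 3, 11, 1, 21, 2, 7]),
     ([0, 12, 2, 17, 1, 8, 3, 22], [0, 17, 3, 12, 1, 22, 2, 8]),
     ([0, 13, 2, 18, 1, 9, 3, 19], [0, 18, 3, 13, 1, 19, 2, 9]),
     ([1, 12, 3, 17, 4, 7, 5, 20], [7, 1, 17, 5, 12, 4, 20, 3]),
     ([1, 13, 3, 18, 4, 8, 5, 21], [8, 1, 18, 5, 13, 4, 21, 3]),
     ([1, 14, 3, 15, 4, 9, 5, 22], [9, 1, 15, 5, 14, 4, 22, 3]),
     ([1, 11, 3, 16, 4, 10, 5, 19], [10, 1, 16, 5, 11, 4, 19, 3]),
     ([0, 10, 2, 21, 4, 14, 5, 15], [14, 0, 21, 5, 10, 4, 15, 2]),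
     ([0, 7, 2, 22, 4, 11, 5, 16], [11, 0, 22, 5, 7, 4, 16, 2]),
     ([0, 8, 2, 19, 4, 12, 5, 17], [12, 0, 19, 5, 8, 4, 17, 2]),
     ([0, 9, 2, 20, 4, 13, 5, 18], [13, 0, 20, 5, 9, 4, 18, 2])]"

definition cert_K44 :: "(nat list \<times> nat list) list" where
  "cert_K44 =
    [([0, 4, 1, 5, 2, 6, 3, 7], [0, 5, 3, 4, 2, 7, 1, 6]),
     ([0, 5, 3, 4, 2, 7, 1, 6], [0, 4, 1, 5, 2, 6, 3, 7])]"

lemma cert_ok_K15:
  "cert_ok cert_K15 (codes_upto 15 (\<lambda>x y. \<not> (y < 9 \<and> x div 3 = y div 3)))"
  by (simp del: sorted_wrt.simps
      add: cert_ok_def cert_K15_def codes_upto_def edge_code_def sorted_wrt2_simps upt_rec)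

lemma cert_ok_K23_minus_K7:
  "cert_ok cert_K23_minus_K7 (codes_upto 23 (\<lambda>x y. \<not> y < 7))"
  by (simp del: sorted_wrt.simps
      add: cert_ok_def cert_K23_minus_K7_def codes_upto_def edge_code_def sorted_wrt2_simps upt_rec)

lemma cert_ok_K44:
  "cert_ok cert_K44 (codes_upto 8 (\<lambda>x y. x < 4 \<and> \<not> y < 4))"
  by (simp del: sorted_wrt.simps
      add: cert_ok_def cert_K44_def codes_upto_def edge_code_def sorted_wrt2_simps upt_rec)

text \<open>The leave of the packing: three vertex-disjoint triangles on 0, 1, 2; 3, 4, 5 and 6, 7, 8.\<close>
definition leave15 :: "nat set set" where
  "leave15 = {{x, y} | x y. x < y \<and> y < 9 \<and> x div 3 = y div 3}"

lemma card_leave15: "card leave15 = 9"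
proof -
  let ?L = "codes_upto 9 (\<lambda>x y. x div 3 = y div 3)"
  have L: "leave15 = code_edge ` set ?L"
    unfolding leave15_def by (simp only: code_edge_codes_upto)
  have "set ?L \<subseteq> edge_codes" by (rule codes_upto_subset) simp
  then have "card leave15 = card (set ?L)"
    unfolding L by (rule card_image[OF inj_on_subset[OF inj_on_code_edge]])
  also have "\<dots> = 9" by (simp add: codes_upto_def upt_rec)
  finally show ?thesis .
qed

lemma leave15_subset: "leave15 \<subseteq> kedges {..<15}"
proof
  fix e assume "e \<in> leave15"
  then obtain x y where "x < y" "y < 9" "e = {x, y}" unfolding leave15_def by blast
  then have "x < y \<and> y < 15 \<and> e = {x, y}" by simp
  then show "e \<in> kedges {..<15}" unfolding kedges_lessThan by blast
qed

lemma paired_decomposable8_K15_minus_leave15: "paired_decomposable8 (kedges {..<15} - leave15)"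
proof -
  have "kedges {..<15} - leave15 =
      code_edge ` set (codes_upto 15 (\<lambda>x y. \<not> (y < 9 \<and> x div 3 = y div 3)))"
    unfolding kedges_lessThan leave15_def ordered_edges_Diff by (simp only: code_edge_codes_upto)
  then show ?thesis using paired_decomposable8_code_edges[OF cert_ok_K15] by simp
qed

lemma paired_decomposable8_K23_minus_K7_base: "paired_decomposable8 (kedges {..<23} - kedges {..<7::nat})"
proof -
  have "kedges {..<23} - kedges {..<7::nat} =
      code_edge ` set (codes_upto 23 (\<lambda>x y. \<not> y < 7))"
    unfolding kedges_lessThan ordered_edges_Diff by (simp only: code_edge_codes_upto)
  then show ?thesis using paired_decomposable8_code_edges[OF cert_ok_K23_minus_K7] by simp
qed

lemma paired_decomposable8_K44_base: "paired_decomposable8 (biclique {..<4} {4..<8::nat})"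
proof -
  have "biclique {..<4} {4..<8::nat} = {{x, y} | x y. x < y \<and> y < 8 \<and> x < 4 \<and> \<not> y < 4}"
    unfolding biclique_def by force
  also have "\<dots> = code_edge ` set (codes_upto 8 (\<lambda>x y. x < 4 \<and> \<not> y < 4))"
    by (simp only: code_edge_codes_upto)
  finally show ?thesis using paired_decomposable8_code_edges[OF cert_ok_K44] by simp
qed

section \<open>The recursive construction\<close>

lemma paired_decomposable8_K23_minus_K7:
  assumes "finite V" "W \<subseteq> V" "card W = 7" "card V = 23"
  shows "paired_decomposable8 (kedges V - kedges W)"
proof -
  have fin: "finite W" "finite (V - W)" using assms(1,2) finite_subset by auto
  have card: "card (V - W) = 16" using card_Diff_subset[OF fin(1) assms(2)] assms(3,4) by simp
  obtain g :: "nat \<Rightarrow> 'a" where g: "inj_on g {..<card W + card (V - W)}" "g ` {..<card W} = W"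
    "g ` {card W..<card W + card (V - W)} = V - W"
    by (rule obtain_enumeration_Un[OF fin]) blast
  have inj: "inj_on g {..<23}" and img7: "g ` {..<7} = W" using g assms(3) card by simp_all
  have "g ` {..<23} = g ` ({..<7} \<union> {7..<23})" by (simp add: ivl_disj_un_one(2))
  then have img23: "g ` {..<23} = V" using g assms(2,3) card by auto
  have sub: "{..<7::nat} \<subseteq> {..<23}" by auto
  have "\<Union>(kedges {..<7::nat}) \<subseteq> {..<23}" using Union_kedges_subset sub by (rule subset_trans)
  then have "map_edges g (kedges {..<23} - kedges {..<7}) =
      map_edges g (kedges {..<23}) - map_edges g (kedges {..<7})"
    by (rule map_edges_Diff[OF inj Union_kedges_subset])
  also have "\<dots> = kedges V - kedges W"
    unfolding map_edges_kedges[OF inj] map_edges_kedges[OF inj_on_subset[OF inj sub]] img7 img23 ..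
  finally have eq: "map_edges g (kedges {..<23} - kedges {..<7}) = kedges V - kedges W" .
  have "\<Union>(kedges {..<23} - kedges {..<7}) \<subseteq> {..<23::nat}"
    using Union_kedges_subset[of "{..<23::nat}"] by auto
  then have "inj_on g (\<Union>(kedges {..<23} - kedges {..<7}))" by (rule inj_on_subset[OF inj])
  from paired_decomposable8_map_edges[OF paired_decomposable8_K23_minus_K7_base this]
  show ?thesis unfolding eq .
qed

lemma paired_decomposable8_biclique_4_4:
  assumes "card A = 4" "card B = 4" "A \<inter> B = {}"
  shows "paired_decomposable8 (biclique A B)"
proof -
  have fin: "finite A" "finite B" using assms(1,2) by (simp_all add: card_ge_0_finite)
  obtain g :: "nat \<Rightarrow> 'a" where g: "inj_on g {..<card A + card B}" "g ` {..<card A} = A"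
    "g ` {card A..<card A + card B} = B"
    by (rule obtain_enumeration_Un[OF fin assms(3)]) blast
  have eq: "map_edges g (biclique {..<4} {4..<8}) = biclique A B"
    using g assms(1,2) by (simp add: map_edges_biclique)
  have "\<Union>(biclique {..<4} {4..<8::nat}) \<subseteq> {..<card A + card B}"
    using assms(1,2) by (auto simp: biclique_def)
  then have "inj_on g (\<Union>(biclique {..<4} {4..<8::nat}))" by (rule inj_on_subset[OF g(1)])
  from paired_decomposable8_map_edges[OF paired_decomposable8_K44_base this]
  show ?thesis unfolding eq .
qed

lemma paired_decomposable8_biclique_blocks:
  fixes a b p q :: nat
  assumes "a + 4 * p \<le> b"
  shows "paired_decomposable8 (biclique {a..<a + 4 * p} {b..<b + 4 * q})"
proof -
  define A where "A i = {a + 4 * i..<a + 4 * i + 4}" for i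
  define B where "B j = {b + 4 * j..<b + 4 * j + 4}" for j
  have UA: "{a..<a + 4 * p} = (\<Union>i<p. A i)" and UB: "{b..<b + 4 * q} = (\<Union>j<q. B j)"
    unfolding A_def B_def by (rule atLeastLessThan_eq_UN_blocks)+
  have "paired_decomposable8 (\<Union>(i, j)\<in>{..<p} \<times> {..<q}. biclique (A i) (B j))"
  proof (rule paired_decomposable8_UN)
    fix ij assume "ij \<in> {..<p} \<times> {..<q}"
    then obtain i j where ij: "ij = (i, j)" "i < p" "j < q" by blast
    have "a + 4 * i + 4 \<le> b" using ij(2) assms by simp
    then have "A i \<inter> B j = {}" unfolding A_def B_def by auto
    then show "paired_decomposable8 (case ij of (i, j) \<Rightarrow> biclique (A i) (B j))"
      unfolding ij(1) A_def B_def by (simp add: paired_decomposable8_biclique_4_4)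
  next
    have "(\<Union>i<p. A i) \<inter> (\<Union>j<q. B j) = {}" unfolding UA[symmetric] UB[symmetric] using assms by auto
    then show "disjoint_family_on (\<lambda>(i, j). biclique (A i) (B j)) ({..<p} \<times> {..<q})"
      unfolding A_def B_def by (intro disjoint_family_on_biclique disjoint_family_on_blocks)
  qed
  then show ?thesis unfolding UA UB biclique_UN .
qed

lemma paired_decomposable8_step:
  fixes p :: nat
  assumes "paired_decomposable8 (kedges {..<4 * p + 7} - L)" "L \<subseteq> kedges {..<4 * p + 7}"
  shows "paired_decomposable8 (kedges {..<4 * p + 23} - L)"
proof -
  let ?U = "{0..<4 * p}" and ?W = "{4 * p..<4 * p + 7}" and ?N = "{4 * p + 7..<4 * p + 23}"
  have disj: "?U \<inter> ?W = {}" "?U \<inter> ?N = {}" "?W \<inter> ?N = {}" by auto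
  have UW: "?U \<union> ?W = {..<4 * p + 7}" and UWN: "?U \<union> ?W \<union> ?N = {..<4 * p + 23}" by auto
  have old: "paired_decomposable8 (kedges (?U \<union> ?W) - L)" using assms(1) UW by simp
  have new: "paired_decomposable8 (kedges (?W \<union> ?N) - kedges ?W)"
  proof (rule paired_decomposable8_K23_minus_K7)
    have "?W \<union> ?N = {4 * p..<4 * p + 23}" by auto
    then show "card (?W \<union> ?N) = 23" by simp
  qed auto
  have cross: "paired_decomposable8 (biclique ?U ?N)"
    using paired_decomposable8_biclique_blocks[of 0 p "4 * p + 7" 4] by (simp add: add.commute)
  define K1 K2 K3 where "K1 = kedges (?U \<union> ?W)" and "K2 = kedges (?W \<union> ?N) - kedges ?W"
    and "K3 = biclique ?U ?N"
  have whole: "kedges {..<4 * p + 23} = K1 \<union> K2 \<union> K3"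
    unfolding K1_def K2_def K3_def using kedges_Un_three[OF disj] UWN by simp
  have K_disj: "K1 \<inter> K2 = {}" "(K1 \<union> K2) \<inter> K3 = {}"
    unfolding K1_def K2_def K3_def by (rule kedges_Un_three_disjoint[OF disj])+
  have "L \<subseteq> K1" unfolding K1_def UW by (rule assms(2))
  with whole K_disj have split: "kedges {..<4 * p + 23} - L = (K1 - L) \<union> K2 \<union> K3" by blast
  have "paired_decomposable8 (K1 - L)" "paired_decomposable8 K2" "paired_decomposable8 K3"
    unfolding K1_def K2_def K3_def by (fact old new cross)+
  moreover have "(K1 - L) \<inter> K2 = {}" "((K1 - L) \<union> K2) \<inter> K3 = {}" using K_disj by blast+
  ultimately show ?thesis unfolding split by (blast intro: paired_decomposable8_Un)
qed

lemma paired_decomposable8_K_minus_leave15: "paired_decomposable8 (kedges {..<16 * k + 15} - leave15)"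
proof (induction k)
  case 0
  then show ?case using paired_decomposable8_K15_minus_leave15 by simp
next
  case (Suc k)
  have n: "4 * (4 * k + 2) + 7 = 16 * k + 15" "4 * (4 * k + 2) + 23 = 16 * Suc k + 15" by simp_all
  have "leave15 \<subseteq> kedges {..<16 * k + 15}"
    using leave15_subset kedges_mono[of "{..<15}" "{..<16 * k + 15}"] by auto
  then show ?case using paired_decomposable8_step[of "4 * k + 2" leave15] Suc.IH unfolding n by simp
qed

theorem lemma3p8:
  fixes n :: nat
  assumes "n mod 16 = 15" and "n \<ge> 15"
  shows "\<exists>C L. max_packing8 {..<n} C L \<and> almost_2perfect8 {..<n} C L"
proof -
  have n: "n = 16 * (n div 16) + 15" using div_mult_mod_eq[of n 16] assms(1) by linarith
  obtain P where P: "paired_decomp8 (kedges {..<n} - leave15) P"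
    using paired_decomposable8_K_minus_leave15[of "n div 16"] n
    unfolding paired_decomposable8_def by auto
  have "leave15 \<subseteq> kedges {..<n}"
    using leave15_subset kedges_mono[of "{..<15}" "{..<n}"] assms(2) by auto
  then have "packing8 {..<n} (fst ` P) leave15" "almost_2perfect8 {..<n} (fst ` P) leave15"
    using almost_2perfect8_if_paired_decomp8[OF P] by auto
  moreover have "card leave15 \<le> card L'" if "packing8 {..<n} C' L'" for C' L'
    using nine_le_card_leave[OF assms(1) that] card_leave15 by simp
  ultimately show ?thesis unfolding max_packing8_def by blast
qed

end
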